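(* Let ${\bold H}$ be a function with domain $\omega$ whose values ${\bold H}(i)$ are countable sets with at least two elements, and let $\bar n\in\mathbf{N}$. Then (1) $\mathbb{Q}^{\bold H}_{\bar n}$ is a forcing notion (i.e. its order is a preorder), and (2) for $p,q\in\mathbb{Q}^{\bold H}_{\bar n}$, $p\leq q$ holds if and only if $w^p\subseteq w^q$ and for each $i\in\omega$ either there is $j\in\omega$ with $\sigma^q_j\subseteq\sigma^p_i$, or there is $m\in\mathrm{dom}(w^q)\cap\mathrm{dom}(\sigma^p_i)$ with $w^q(m)\neq\sigma^p_i(m)$.
   Context: $\mathbf{N}$ is the set of sequences $\bar n=\langle n^0_m,n^1_m:m<\omega\rangle$ of integers with $4<n^0_m\leq n^1_m<n^0_{m+1}$ for all $m$, $2^{2(m^*+2)}\sum_{m<m^*}n^0_m n^1_m<n^0_{m^*}$ for every $m^*\in\omega$, and $\lim_{m\to\infty}(n^1_m)^{1/(2n^0_m)}=\infty$. Conditions of $\mathbb{Q}^{\bold H}_{\bar n}$ are sequences $p=(w^p,\sigma^p_0,\sigma^p_1,\dots)$ of finite functions with pairwise disjoint domains, $w^p(i),\sigma^p_j(i)\in{\bold H}(i)$, such that for some $m^*=m^*(p)<\omega$ there is a partition $\langle V^p_m:m^*\leq m<\omega\rangle$ of $\omega$ with $|V^p_m|\leq n^1_m2^{m^*}$ and $|\mathrm{dom}(\sigma^p_j)|\geq n^0_m/2^{m^*}$ for $j\in V^p_m$. $\mathrm{POS}(p)=\{\eta\in\prod_{i\in\omega}{\bold H}(i): w^p\subseteq\eta,\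 \sigma^p_j\not\subseteq\eta\text{ for all }j\}$, and $p\leq q$ iff $\mathrm{POS}(q)\subseteq\mathrm{POS}(p)$. *)

theory Defs
  imports Complex_Main "HOL-Library.Countable_Set"
begin

definition nbar_N :: "(nat \<Rightarrow> nat) \<Rightarrow> (nat \<Rightarrow> nat) \<Rightarrow> bool" where
  "nbar_N n0 n1 \<longleftrightarrow>
     (\<forall>m. 4 < n0 m \<and> n0 m \<le> n1 m \<and> n1 m < n0 (Suc m)) \<and>
     (\<forall>ms. 2 ^ (2 * (ms + 2)) * (\<Sum>m<ms. n0 m * n1 m) < n0 ms) \<and>
     filterlim (\<lambda>m. real (n1 m) powr (1 / (2 * real (n0 m)))) at_top sequentially"

text \<open>A condition p = (w^p, sigma^p_0, sigma^p_1, ...), finite partial functions.\<close>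
type_synonym 'a qcond = "(nat \<rightharpoonup> 'a) \<times> (nat \<Rightarrow> (nat \<rightharpoonup> 'a))"

definition is_cond :: "(nat \<Rightarrow> 'a set) \<Rightarrow> (nat \<Rightarrow> nat) \<Rightarrow> (nat \<Rightarrow> nat) \<Rightarrow> 'a qcond \<Rightarrow> bool" where
  "is_cond H n0 n1 p \<longleftrightarrow>
     (let w = fst p; \<sigma> = snd p in
       finite (dom w) \<and> (\<forall>j. finite (dom (\<sigma> j))) \<and>
       (\<forall>j. dom w \<inter> dom (\<sigma> j) = {}) \<and>
       (\<forall>j k. j \<noteq> k \<longrightarrow> dom (\<sigma> j) \<inter> dom (\<sigma> k) = {}) \<and>
       (\<forall>i a. w i = Some a \<longrightarrow> a \<in> H i) \<and>
       (\<forall>j i a. \<sigma> j i = Some a \<longrightarrow> a \<in> H i) \<and>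
       (\<exists>ms. \<exists>V :: nat \<Rightarrow> nat set.
          (\<forall>j. \<exists>!m. ms \<le> m \<and> j \<in> V m) \<and>
          (\<forall>m\<ge>ms. finite (V m) \<and> card (V m) \<le> n1 m * 2 ^ ms) \<and>
          (\<forall>m\<ge>ms. \<forall>j\<in>V m. real (card (dom (\<sigma> j))) \<ge> real (n0 m) / 2 ^ ms)))"

definition Qcond :: "(nat \<Rightarrow> 'a set) \<Rightarrow> (nat \<Rightarrow> nat) \<Rightarrow> (nat \<Rightarrow> nat) \<Rightarrow> 'a qcond set" where
  "Qcond H n0 n1 = {p. is_cond H n0 n1 p}"

definition POS :: "(nat \<Rightarrow> 'a set) \<Rightarrow> 'a qcond \<Rightarrow> (nat \<Rightarrow> 'a) set" where
  "POS H p = {\<eta>. (\<forall>i. \<eta> i \<in> H i) \<and> fst p \<subseteq>\<^sub>m (Some \<circ> \<eta>) \<and>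
                  (\<forall>j. \<not> (snd p j \<subseteq>\<^sub>m (Some \<circ> \<eta>)))}"

definition Qle :: "(nat \<Rightarrow> 'a set) \<Rightarrow> 'a qcond \<Rightarrow> 'a qcond \<Rightarrow> bool" where
  "Qle H p q \<longleftrightarrow> POS H q \<subseteq> POS H p"

definition Qorder :: "(nat \<Rightarrow> 'a set) \<Rightarrow> (nat \<Rightarrow> nat) \<Rightarrow> (nat \<Rightarrow> nat) \<Rightarrow> ('a qcond \<times> 'a qcond) set" where
  "Qorder H n0 n1 = {(p, q). p \<in> Qcond H n0 n1 \<and> q \<in> Qcond H n0 n1 \<and> Qle H p q}"

end

theory Submission
  imports Defs
begin

(* Since p \<le> q means POS q \<subseteq> POS p, the criterion is clearly sufficient. For necessity,
   any partial function f extending w^q that contains no \<sigma>^q_j extends to some \<eta> \<in> POS q: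
   the domains of the \<sigma>^q_j are disjoint, so at each point outside dom f at most one value
   is forbidden, and |H(i)| \<ge> 2 leaves a choice. Applying this to w^q \<union> \<sigma>^p_i gives the
   clause for \<sigma>^p_i, and applying it to w^q extended at m by a value other than w^p(m) gives
   w^p \<subseteq> w^q; the latter needs every \<sigma>^q_j to have two points, which the growth
   conditions on n_bar guarantee. *)

lemma exists_value_avoiding:
  fixes \<sigma> :: "'i \<Rightarrow> 'k \<rightharpoonup> 'a"
  assumes two: "\<exists>a b. a \<in> A \<and> b \<in> A \<and> a \<noteq> b"
    and disjoint: "\<And>j k. j \<noteq> k \<Longrightarrow> dom (\<sigma> j) \<inter> dom (\<sigma> k) = {}"
  shows "\<exists>b\<in>A. \<forall>j. \<sigma> j x \<noteq> Some b"
proof -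
  obtain a b where ab: "a \<in> A" "b \<in> A" "a \<noteq> b"
    using two by blast
  show ?thesis
  proof (cases "\<exists>j. \<sigma> j x = Some a")
    case True
    then obtain j0 where j0: "\<sigma> j0 x = Some a" ..
    have "\<sigma> j x \<noteq> Some b" for j
      using disjoint[of j j0] j0 ab(3) by (cases "j = j0") auto
    then show ?thesis
      using ab(2) by blast
  qed (use ab(1) in blast)
qed

lemma exists_total_extension_avoiding:
  fixes f :: "'k \<rightharpoonup> 'a" and \<sigma> :: "'i \<Rightarrow> 'k \<rightharpoonup> 'a"
  assumes two: "\<And>x. \<exists>a b. a \<in> H x \<and> b \<in> H x \<and> a \<noteq> b"
    and disjoint: "\<And>j k. j \<noteq> k \<Longrightarrow> dom (\<sigma> j) \<inter> dom (\<sigma> k) = {}"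
    and f_in_H: "\<And>x a. f x = Some a \<Longrightarrow> a \<in> H x"
    and not_sub: "\<And>j. \<not> \<sigma> j \<subseteq>\<^sub>m f"
  shows "\<exists>\<eta>. (\<forall>x. \<eta> x \<in> H x) \<and> f \<subseteq>\<^sub>m Some \<circ> \<eta> \<and> (\<forall>j. \<not> \<sigma> j \<subseteq>\<^sub>m Some \<circ> \<eta>)"
proof -
  have "\<forall>x. \<exists>b. b \<in> H x \<and> (\<forall>j. \<sigma> j x \<noteq> Some b)"
    using exists_value_avoiding[where \<sigma>=\<sigma>, OF two disjoint] by blast
  from choice[OF this] obtain avoid
    where avoid: "\<And>x. avoid x \<in> H x" "\<And>x j. \<sigma> j x \<noteq> Some (avoid x)"
    by blast
  define \<eta> where "\<eta> x = (case f x of Some a \<Rightarrow> a | None \<Rightarrow> avoid x)" for x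
  have f_sub: "f \<subseteq>\<^sub>m Some \<circ> \<eta>"
    by (auto simp: map_le_def \<eta>_def)
  have "\<not> \<sigma> j \<subseteq>\<^sub>m Some \<circ> \<eta>" for j
  proof
    assume "\<sigma> j \<subseteq>\<^sub>m Some \<circ> \<eta>"
    then have "\<sigma> j x = f x" if "x \<in> dom (\<sigma> j)" for x
      using that avoid(2)[of j x] unfolding map_le_def \<eta>_def
      by (cases "f x") auto
    then show False
      using not_sub[of j] by (simp add: map_le_def)
  qed
  moreover have "\<eta> x \<in> H x" for x
    using f_in_H[of x] avoid(1)[of x] by (cases "f x") (auto simp: \<eta>_def)
  ultimately show ?thesis
    using f_sub by blast
qed

lemma is_condD:
  assumes "is_cond H n0 n1 p"
  shows "dom (fst p) \<inter> dom (snd p j) = {}"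
    and "j \<noteq> k \<Longrightarrow> dom (snd p j) \<inter> dom (snd p k) = {}"
    and "fst p x = Some a \<Longrightarrow> a \<in> H x"
    and "snd p j x = Some a \<Longrightarrow> a \<in> H x"
  using assms unfolding is_cond_def Let_def by auto

lemma exists_POS_extension:
  assumes two: "\<And>x. \<exists>a b. a \<in> H x \<and> b \<in> H x \<and> a \<noteq> b"
    and q: "is_cond H n0 n1 q"
    and w_sub: "fst q \<subseteq>\<^sub>m f"
    and f_in_H: "\<And>x a. f x = Some a \<Longrightarrow> a \<in> H x"
    and not_sub: "\<And>j. \<not> snd q j \<subseteq>\<^sub>m f"
  obtains \<eta> where "\<eta> \<in> POS H q" and "f \<subseteq>\<^sub>m Some \<circ> \<eta>"
proof -
  obtain \<eta> where \<eta>: "\<forall>x. \<eta> x \<in> H x" "f \<subseteq>\<^sub>m Some \<circ> \<eta>" "\<forall>j. \<not> snd q j \<subseteq>\<^sub>m Some \<circ> \<eta>"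
    using exists_total_extension_avoiding[where H=H and \<sigma>="snd q", OF two is_condD(2)[OF q] f_in_H not_sub]
    by blast
  have "\<eta> \<in> POS H q"
    using \<eta> map_le_trans[OF w_sub \<eta>(2)] by (simp add: POS_def)
  with \<eta>(2) show thesis
    using that by blast
qed

lemma nbar_N_mono_n0:
  assumes "nbar_N n0 n1"
  shows "mono n0"
proof (rule incseq_SucI)
  fix m
  show "n0 m \<le> n0 (Suc m)"
    using assms unfolding nbar_N_def by (meson less_imp_le order.trans)
qed

lemma nbar_N_pow2_less_n0:
  assumes N: "nbar_N n0 n1" and "ms \<le> m"
  shows "2 ^ ms < n0 m"
proof -
  have growth: "2 ^ (2 * (ms + 2)) * (\<Sum>k<ms. n0 k * n1 k) < n0 ms"
    and n0_0: "4 < n0 0" and n1_0: "n0 0 \<le> n1 0"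
    using N unfolding nbar_N_def by auto
  have "2 ^ ms < n0 ms"
  proof (cases ms)
    case 0
    then show ?thesis
      using n0_0 by simp
  next
    case (Suc k)
    have "1 \<le> n0 0 * n1 0"
      using n0_0 n1_0 by (simp add: Suc_le_eq)
    also have "\<dots> \<le> (\<Sum>k<ms. n0 k * n1 k)"
      using Suc by (intro member_le_sum) auto
    finally have "2 ^ (2 * (ms + 2)) \<le> 2 ^ (2 * (ms + 2)) * (\<Sum>k<ms. n0 k * n1 k)"
      by simp
    moreover have "(2::nat) ^ ms \<le> 2 ^ (2 * (ms + 2))"
      by (rule power_increasing) auto
    ultimately show ?thesis
      using growth by linarith
  qed
  also have "n0 ms \<le> n0 m"
    using nbar_N_mono_n0[OF N] \<open>ms \<le> m\<close> by (rule monoD)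
  finally show ?thesis .
qed

lemma is_cond_two_le_card_dom_snd:
  assumes N: "nbar_N n0 n1" and q: "is_cond H n0 n1 q"
  shows "2 \<le> card (dom (snd q j))"
proof -
  obtain ms V where V: "\<forall>j. \<exists>!m. ms \<le> m \<and> j \<in> V m"
      "\<forall>m\<ge>ms. \<forall>j\<in>V m. real (card (dom (snd q j))) \<ge> real (n0 m) / 2 ^ ms"
    using q unfolding is_cond_def Let_def by metis
  then obtain m where "ms \<le> m" and card_ge: "real (card (dom (snd q j))) \<ge> real (n0 m) / 2 ^ ms"
    by blast
  have "real (2 ^ ms) < real (n0 m)"
    using nbar_N_pow2_less_n0[OF N \<open>ms \<le> m\<close>] by (simp only: of_nat_less_iff)
  then have "1 < real (n0 m) / 2 ^ ms"
    by simp
  with card_ge show ?thesis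
    by linarith
qed

lemma preorder_on_Qorder: "preorder_on (Qcond H n0 n1) (Qorder H n0 n1)"
  unfolding preorder_on_def refl_on_def trans_def Qorder_def Qle_def by auto

lemma Qle_if_criterion:
  assumes w_sub: "fst p \<subseteq>\<^sub>m fst q"
    and refuted: "\<And>i. (\<exists>j. snd q j \<subseteq>\<^sub>m snd p i) \<or>
                      (\<exists>m\<in>dom (fst q) \<inter> dom (snd p i). fst q m \<noteq> snd p i m)"
  shows "Qle H p q"
  unfolding Qle_def
proof
  fix \<eta> assume "\<eta> \<in> POS H q"
  then have \<eta>_in_H: "\<forall>x. \<eta> x \<in> H x" and wq_sub: "fst q \<subseteq>\<^sub>m Some \<circ> \<eta>"
    and not_sub: "\<forall>j. \<not> snd q j \<subseteq>\<^sub>m Some \<circ> \<eta>"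
    by (auto simp: POS_def)
  have "\<not> snd p i \<subseteq>\<^sub>m Some \<circ> \<eta>" for i
  proof
    assume sub: "snd p i \<subseteq>\<^sub>m Some \<circ> \<eta>"
    from refuted[of i] show False
    proof
      assume "\<exists>j. snd q j \<subseteq>\<^sub>m snd p i"
      then show False
        using not_sub sub map_le_trans by blast
    next
      assume "\<exists>m\<in>dom (fst q) \<inter> dom (snd p i). fst q m \<noteq> snd p i m"
      then obtain m where "m \<in> dom (fst q)" "m \<in> dom (snd p i)" "fst q m \<noteq> snd p i m"
        by blast
      with wq_sub sub show False
        unfolding map_le_def by (metis comp_apply)
    qed
  qed
  then show "\<eta> \<in> POS H p"
    using \<eta>_in_H map_le_trans[OF w_sub wq_sub] by (simp add: POS_def)
qed

lemma fst_map_le_if_Qle: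
  assumes two: "\<And>x. \<exists>a b. a \<in> H x \<and> b \<in> H x \<and> a \<noteq> b"
    and N: "nbar_N n0 n1" and q: "is_cond H n0 n1 q"
    and le: "Qle H p q"
  shows "fst p \<subseteq>\<^sub>m fst q"
  unfolding map_le_def
proof (rule ballI, rule ccontr)
  fix m assume m: "m \<in> dom (fst p)" and differ: "fst p m \<noteq> fst q m"
  then obtain a where a: "fst p m = Some a"
    by blast
  obtain b where b: "b \<in> H m" "b \<noteq> a"
    using two[of m] by blast
  define f where "f = [m \<mapsto> b] ++ fst q"
  have f_in_H: "f x = Some c \<Longrightarrow> c \<in> H x" for x c
    using b is_condD(3)[OF q] by (auto simp: f_def map_add_Some_iff split: if_splits)
  have not_sub: "\<not> snd q j \<subseteq>\<^sub>m f" for j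
  proof -
    have "\<not> dom (snd q j) \<subseteq> {m}"
      using is_cond_two_le_card_dom_snd[OF N q, of j] by (auto dest: subset_singletonD)
    then obtain x where "x \<in> dom (snd q j)" "x \<noteq> m"
      by blast
    moreover from this have "x \<notin> dom (fst q)"
      using is_condD(1)[OF q, of j] by blast
    ultimately have "f x = None"
      by (simp add: f_def map_add_def domIff)
    with \<open>x \<in> dom (snd q j)\<close> show ?thesis
      unfolding map_le_def by (metis domIff)
  qed
  obtain \<eta> where "\<eta> \<in> POS H q" and f_sub: "f \<subseteq>\<^sub>m Some \<circ> \<eta>"
    using exists_POS_extension[OF two q _ f_in_H not_sub] by (auto simp: f_def)
  then have "fst p \<subseteq>\<^sub>m Some \<circ> \<eta>"
    using le by (auto simp: Qle_def POS_def)
  with m a have "\<eta> m = a"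
    by (auto simp: map_le_def)
  moreover have "f m = Some (\<eta> m)"
    using f_sub by (auto simp: map_le_def f_def)
  moreover have "f m \<noteq> Some a"
    using differ a b(2) by (cases "fst q m") (auto simp: f_def)
  ultimately show False
    by simp
qed

lemma sigma_covered_if_Qle:
  assumes two: "\<And>x. \<exists>a b. a \<in> H x \<and> b \<in> H x \<and> a \<noteq> b"
    and p: "is_cond H n0 n1 p" and q: "is_cond H n0 n1 q"
    and le: "Qle H p q"
    and compatible: "\<And>m. m \<in> dom (fst q) \<Longrightarrow> m \<in> dom (snd p i) \<Longrightarrow> fst q m = snd p i m"
  shows "\<exists>j. snd q j \<subseteq>\<^sub>m snd p i"
proof -
  define f where "f = fst q ++ snd p i"
  have w_sub: "fst q \<subseteq>\<^sub>m f"
    unfolding map_le_def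
  proof
    fix x assume "x \<in> dom (fst q)"
    then show "fst q x = f x"
      using compatible[of x] by (cases "snd p i x") (auto simp: f_def map_add_def)
  qed
  have \<sigma>_sub: "snd p i \<subseteq>\<^sub>m f"
    by (simp add: f_def map_le_map_add)
  have f_in_H: "f x = Some c \<Longrightarrow> c \<in> H x" for x c
    using is_condD(3)[OF q] is_condD(4)[OF p] by (auto simp: f_def map_add_Some_iff)
  have "\<exists>j. snd q j \<subseteq>\<^sub>m f"
  proof (rule ccontr)
    assume "\<nexists>j. snd q j \<subseteq>\<^sub>m f"
    then obtain \<eta> where "\<eta> \<in> POS H q" and "f \<subseteq>\<^sub>m Some \<circ> \<eta>"
      using exists_POS_extension[OF two q w_sub f_in_H] by blast
    moreover from this have "\<eta> \<in> POS H p"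
      using le by (auto simp: Qle_def)
    ultimately show False
      using map_le_trans[OF \<sigma>_sub] by (auto simp: POS_def)
  qed
  then obtain j where j: "snd q j \<subseteq>\<^sub>m f" ..
  have "snd q j \<subseteq>\<^sub>m snd p i"
    unfolding map_le_def
  proof
    fix x assume x: "x \<in> dom (snd q j)"
    then have "fst q x = None"
      using is_condD(1)[OF q, of j] by blast
    with x j show "snd q j x = snd p i x"
      by (auto simp: map_le_def f_def map_add_def split: option.splits)
  qed
  then show ?thesis ..
qed

theorem proposition4p2:
  fixes H :: "nat \<Rightarrow> 'a set" and n0 n1 :: "nat \<Rightarrow> nat"
  assumes "\<And>i. countable (H i)"
    and "\<And>i. \<exists>a b. a \<in> H i \<and> b \<in> H i \<and> a \<noteq> b"
    and "nbar_N n0 n1"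
  shows "preorder_on (Qcond H n0 n1) (Qorder H n0 n1) \<and>
    (\<forall>p\<in>Qcond H n0 n1. \<forall>q\<in>Qcond H n0 n1.
       Qle H p q \<longleftrightarrow>
         (fst p \<subseteq>\<^sub>m fst q \<and>
          (\<forall>i. (\<exists>j. snd q j \<subseteq>\<^sub>m snd p i) \<or>
               (\<exists>m\<in>dom (fst q) \<inter> dom (snd p i). fst q m \<noteq> snd p i m))))"
proof (intro conjI[OF preorder_on_Qorder] ballI iffI)
  fix p q
  assume "p \<in> Qcond H n0 n1" "q \<in> Qcond H n0 n1" and le: "Qle H p q"
  then have p: "is_cond H n0 n1 p" and q: "is_cond H n0 n1 q"
    by (simp_all add: Qcond_def)
  have "(\<exists>j. snd q j \<subseteq>\<^sub>m snd p i) \<or>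
        (\<exists>m\<in>dom (fst q) \<inter> dom (snd p i). fst q m \<noteq> snd p i m)" for i
    using sigma_covered_if_Qle[OF assms(2) p q le, of i] by blast
  with fst_map_le_if_Qle[OF assms(2,3) q le]
  show "fst p \<subseteq>\<^sub>m fst q \<and> (\<forall>i. (\<exists>j. snd q j \<subseteq>\<^sub>m snd p i) \<or>
          (\<exists>m\<in>dom (fst q) \<inter> dom (snd p i). fst q m \<noteq> snd p i m))"
    by blast
next
  fix p q :: "'a qcond"
  assume "fst p \<subseteq>\<^sub>m fst q \<and> (\<forall>i. (\<exists>j. snd q j \<subseteq>\<^sub>m snd p i) \<or>
          (\<exists>m\<in>dom (fst q) \<inter> dom (snd p i). fst q m \<noteq> snd p i m))"
  then show "Qle H p q"
    by (intro Qle_if_criterion) auto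
qed

end
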